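(* Let $S_2$ be the two-dimensional Lie triple system with basis $e,f$ and products $[e,f,e]=2e$, $[e,f,f]=-2f$ (over a field of characteristic $0$). Then in $U(S_2)$, for every $n\ge1$, $$e^nf-fe^n=n(n-1)\,e^{n-1},$$ where $e^n=e(e(\cdots(ee)\cdots))$ ($n$ factors) and $e^0=1$.
   Context: A Lie triple system (L.t.s.) is a vector space $V$ with trilinear product $[\cdot,\cdot,\cdot]$ satisfying $[a,a,b]=0$, $[a,b,c]+[b,c,a]+[c,a,b]=0$, $[x,y,[a,b,c]]=[[x,y,a],b,c]+[a,[x,y,b],c]+[a,b,[x,y,c]]$ (so the products of $S_2$ determine the rest by these identities). The universal enveloping algebra $U(V)$ (in the sense of Pérez-Izquierdo, $V$ viewed as a Bol algebra with zero binary bracket) is a unital non-associative bialgebra generated as a unital algebra by $V\subseteq U(V)$ ($V$ = primitive elements), satisfying $\sum a_{(1)}(y(a_{(2)}z))=\sum (a_{(1)}(ya_{(2)}))z$; in particular, for $a,b,c\in V$, $ab=ba$, $a(bc)-b(ac)=[a,b,c]$, and for $a,b\in V$ the map $x\mapsto a(bx)-b(ax)$ is a derivation of $U(V)$. *)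

theory Defs
  imports Complex_Main
begin

definition bilinear_op ::
  "('k::field \<Rightarrow> 'a::ab_group_add \<Rightarrow> 'a) \<Rightarrow> ('a \<Rightarrow> 'a \<Rightarrow> 'a) \<Rightarrow> bool" where
  "bilinear_op sc m \<longleftrightarrow>
     (\<forall>x y z. m (x + y) z = m x z + m y z) \<and>
     (\<forall>x y z. m x (y + z) = m x y + m x z) \<and>
     (\<forall>c x y. m (sc c x) y = sc c (m x y)) \<and>
     (\<forall>c x y. m x (sc c y) = sc c (m x y))"

definition unital_algebra ::
  "('k::field \<Rightarrow> 'a::ab_group_add \<Rightarrow> 'a) \<Rightarrow> ('a \<Rightarrow> 'a \<Rightarrow> 'a) \<Rightarrow> 'a \<Rightarrow> bool" where
  "unital_algebra sc m u \<longleftrightarrow> module sc \<and> bilinear_op sc m \<and> (\<forall>x. m u x = x \<and> m x u = x)"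

text \<open>Elements of the tensor products A\<otimes>A and A\<otimes>A\<otimes>A are represented by finite lists
  of pure tensors.  Two such representatives denote the same tensor iff they agree on all
  bilinear (resp. trilinear) forms A \<times> A \<rightarrow> k (this is the standard description of equality
  of tensors over a field).\<close>

definition bilinear_form :: "('k::field \<Rightarrow> 'a::ab_group_add \<Rightarrow> 'a) \<Rightarrow> ('a \<Rightarrow> 'a \<Rightarrow> 'k) \<Rightarrow> bool" where
  "bilinear_form sc \<beta> \<longleftrightarrow>
     (\<forall>x y z. \<beta> (x + y) z = \<beta> x z + \<beta> y z) \<and>
     (\<forall>x y z. \<beta> x (y + z) = \<beta> x y + \<beta> x z) \<and>
     (\<forall>c x y. \<beta> (sc c x) y = c * \<beta> x y) \<and>
     (\<forall>c x y. \<beta> x (sc c y) = c * \<beta> x y)"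

definition trilinear_form ::
  "('k::field \<Rightarrow> 'a::ab_group_add \<Rightarrow> 'a) \<Rightarrow> ('a \<Rightarrow> 'a \<Rightarrow> 'a \<Rightarrow> 'k) \<Rightarrow> bool" where
  "trilinear_form sc \<gamma> \<longleftrightarrow>
     (\<forall>z. bilinear_form sc (\<lambda>x y. \<gamma> x y z)) \<and>
     (\<forall>x. bilinear_form sc (\<lambda>y z. \<gamma> x y z))"

definition teval :: "('a \<Rightarrow> 'a \<Rightarrow> 'b::comm_monoid_add) \<Rightarrow> ('a \<times> 'a) list \<Rightarrow> 'b" where
  "teval \<beta> T = sum_list (map (\<lambda>(p, q). \<beta> p q) T)"

definition teq ::
  "('k::field \<Rightarrow> 'a::ab_group_add \<Rightarrow> 'a) \<Rightarrow> ('a \<times> 'a) list \<Rightarrow> ('a \<times> 'a) list \<Rightarrow> bool" where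
  "teq sc T1 T2 \<longleftrightarrow> (\<forall>\<beta>. bilinear_form sc \<beta> \<longrightarrow> teval \<beta> T1 = teval \<beta> T2)"

definition tmul :: "('a \<Rightarrow> 'a \<Rightarrow> 'a) \<Rightarrow> ('a \<times> 'a) list \<Rightarrow> ('a \<times> 'a) list \<Rightarrow> ('a \<times> 'a) list" where
  "tmul m T1 T2 = concat (map (\<lambda>(a, b). map (\<lambda>(c, d). (m a c, m b d)) T2) T1)"

text \<open>The coproduct
  is given by a chosen representative \<Delta> x of \<Delta>(x) \<in> A\<otimes>A.\<close>

definition cocomm_bialgebra ::
  "('k::field \<Rightarrow> 'a::ab_group_add \<Rightarrow> 'a) \<Rightarrow> ('a \<Rightarrow> 'a \<Rightarrow> 'a) \<Rightarrow> 'a \<Rightarrow>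
   ('a \<Rightarrow> ('a \<times> 'a) list) \<Rightarrow> ('a \<Rightarrow> 'k) \<Rightarrow> bool" where
  "cocomm_bialgebra sc m u \<Delta> \<epsilon> \<longleftrightarrow>
     unital_algebra sc m u \<and>
     \<comment> \<open>\<Delta> linear\<close>
     (\<forall>x y. teq sc (\<Delta> (x + y)) (\<Delta> x @ \<Delta> y)) \<and>
     (\<forall>c x. teq sc (\<Delta> (sc c x)) (map (\<lambda>(p, q). (sc c p, q)) (\<Delta> x))) \<and>
     \<comment> \<open>\<epsilon> linear\<close>
     (\<forall>x y. \<epsilon> (x + y) = \<epsilon> x + \<epsilon> y) \<and>
     (\<forall>c x. \<epsilon> (sc c x) = c * \<epsilon> x) \<and>
     \<comment> \<open>coassociativity\<close>
     (\<forall>x \<gamma>. trilinear_form sc \<gamma> \<longrightarrow>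
        teval (\<lambda>p q. teval (\<lambda>r s. \<gamma> r s q) (\<Delta> p)) (\<Delta> x) =
        teval (\<lambda>p q. teval (\<lambda>r s. \<gamma> p r s) (\<Delta> q)) (\<Delta> x)) \<and>
     \<comment> \<open>counit\<close>
     (\<forall>x. teval (\<lambda>p q. sc (\<epsilon> p) q) (\<Delta> x) = x) \<and>
     (\<forall>x. teval (\<lambda>p q. sc (\<epsilon> q) p) (\<Delta> x) = x) \<and>
     \<comment> \<open>cocommutativity\<close>
     (\<forall>x. teq sc (\<Delta> x) (map (\<lambda>(p, q). (q, p)) (\<Delta> x))) \<and>
     \<comment> \<open>\<Delta>, \<epsilon> are unital algebra morphisms\<close>
     (\<forall>x y. teq sc (\<Delta> (m x y)) (tmul m (\<Delta> x) (\<Delta> y))) \<and>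
     teq sc (\<Delta> u) [(u, u)] \<and>
     (\<forall>x y. \<epsilon> (m x y) = \<epsilon> x * \<epsilon> y) \<and>
     \<epsilon> u = 1"

definition primitive ::
  "('k::field \<Rightarrow> 'a::ab_group_add \<Rightarrow> 'a) \<Rightarrow> 'a \<Rightarrow> ('a \<Rightarrow> ('a \<times> 'a) list) \<Rightarrow> 'a \<Rightarrow> bool" where
  "primitive sc u \<Delta> x \<longleftrightarrow> teq sc (\<Delta> x) [(x, u), (u, x)]"

definition generated_by ::
  "('k::field \<Rightarrow> 'a::ab_group_add \<Rightarrow> 'a) \<Rightarrow> ('a \<Rightarrow> 'a \<Rightarrow> 'a) \<Rightarrow> 'a \<Rightarrow> 'a set \<Rightarrow> bool" where
  "generated_by sc m u V \<longleftrightarrow>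
     (\<forall>S. u \<in> S \<and> V \<subseteq> S \<and> (\<forall>x\<in>S. \<forall>y\<in>S. x + y \<in> S \<and> m x y \<in> S) \<and>
          (\<forall>c. \<forall>x\<in>S. sc c x \<in> S) \<longrightarrow> S = UNIV)"

text \<open>The defining data of U(S_2): a non-associative bialgebra A whose space of
  primitive elements is S_2 = span{e,f} (e, f linearly independent), which is generated
  by S_2, which satisfies the identity
  \<Sum> a_(1)(y(a_(2)z)) = \<Sum> (a_(1)(y a_(2)))z, and in which the Lie triple product of S_2
  ([e,f,e]=2e, [e,f,f]=-2f, and hence [e,e,-]=[f,f,-]=0, [f,e,-]=-[e,f,-]) is realized by
  a(bc)-b(ac) with ab=ba on S_2, and x \<mapsto> a(bx)-b(ax) is a derivation.\<close>

definition U_S2 ::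
  "('k::field \<Rightarrow> 'a::ab_group_add \<Rightarrow> 'a) \<Rightarrow> ('a \<Rightarrow> 'a \<Rightarrow> 'a) \<Rightarrow> 'a \<Rightarrow>
   ('a \<Rightarrow> ('a \<times> 'a) list) \<Rightarrow> ('a \<Rightarrow> 'k) \<Rightarrow> 'a \<Rightarrow> 'a \<Rightarrow> bool" where
  "U_S2 sc m u \<Delta> \<epsilon> e f \<longleftrightarrow>
     cocomm_bialgebra sc m u \<Delta> \<epsilon> \<and>
     (\<forall>a b. sc a e + sc b f = 0 \<longrightarrow> a = 0 \<and> b = 0) \<and>
     {x. primitive sc u \<Delta> x} = {sc a e + sc b f | a b. True} \<and>
     generated_by sc m u {sc a e + sc b f | a b. True} \<and>
     (\<forall>a y z. teval (\<lambda>p q. m p (m y (m q z))) (\<Delta> a) =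
              teval (\<lambda>p q. m (m p (m y q)) z) (\<Delta> a)) \<and>
     m e f = m f e \<and>
     m e (m f e) - m f (m e e) = e + e \<and>
     m e (m f f) - m f (m e f) = - (f + f) \<and>
     (\<forall>x y. m e (m f (m x y)) - m f (m e (m x y)) =
            m (m e (m f x) - m f (m e x)) y + m x (m e (m f y) - m f (m e y)))"

primrec npow :: "('a \<Rightarrow> 'a \<Rightarrow> 'a) \<Rightarrow> 'a \<Rightarrow> 'a \<Rightarrow> nat \<Rightarrow> 'a" where
  "npow m u x 0 = u"
| "npow m u x (Suc n) = m x (npow m u x n)"

end

theory Submission
  imports Defs
begin

text \<open>Since e is primitive, the identity of U(S_2) specialises to
  e(yz) + y(ez) = (ey)z + (ye)z, and induction on k (dividing by 2) turns it into
  e^k z = L_e^k z, with L_e left multiplication by e.  The derivation D = L_e L_f - L_f L_e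
  satisfies De = 2e, hence D e^k = 2k e^k.  Writing f(ex) = e(fx) - Dx and inducting once more
  gives f e^n = L_e^n f - n(n-1) e^(n-1), while e^n f = L_e^n f.\<close>

lemma npow_Suc_right: "npow m z x (Suc j) = npow m (m x z) x j"
  by (induction j) auto

lemma teval_additive:
  fixes g :: "'b::comm_monoid_add \<Rightarrow> 'c::cancel_comm_monoid_add"
  assumes "\<And>a b. g (a + b) = g a + g b"
  shows "g (teval F T) = teval (\<lambda>p q. g (F p q)) T"
proof -
  have "g 0 = 0"
    using assms[of 0 0] by simp
  then show ?thesis
    by (induction T) (auto simp: teval_def assms)
qed

lemma (in vector_space) exists_linear_functional_eq_one:
  assumes "x \<noteq> 0"
  obtains g where "Vector_Spaces.linear scale (*) g" "g x = 1"
proof -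
  interpret vector_space_pair scale "(*) :: 'a \<Rightarrow> 'a \<Rightarrow> 'a"
    by unfold_locales (auto simp: algebra_simps)
  from assms have "independent {x}"
    by simp
  from linear_independent_extend[OF this, of "\<lambda>_. 1"] show ?thesis
    using that by auto
qed

text \<open>Since teq only tests scalar bilinear forms, compose F with a functional separating
  the two values.\<close>

lemma teq_teval_bilinear_op:
  fixes sc :: "'k::field \<Rightarrow> 'a::ab_group_add \<Rightarrow> 'a"
  assumes "module sc" and "teq sc T T'" and "bilinear_op sc F"
  shows "teval F T = teval F T'"
proof (rule ccontr)
  interpret vector_space sc
    using assms(1) by (simp add: module_iff_vector_space)
  assume "teval F T \<noteq> teval F T'"
  then obtain g where g: "Vector_Spaces.linear sc (*) g" and g1: "g (teval F T - teval F T') = 1"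
    by (metis exists_linear_functional_eq_one right_minus_eq)
  interpret g: Vector_Spaces.linear sc "(*)" g
    by (fact g)
  have "bilinear_form sc (\<lambda>p q. g (F p q))"
    using assms(3) by (simp add: bilinear_op_def bilinear_form_def g.add g.scale)
  with assms(2) have "teval (\<lambda>p q. g (F p q)) T = teval (\<lambda>p q. g (F p q)) T'"
    by (simp add: teq_def)
  then have "g (teval F T - teval F T') = 0"
    by (simp add: g.diff teval_additive[of g, OF g.add])
  with g1 show False
    by simp
qed

locale unital_nonassoc_algebra =
  fixes sc :: "'k::field \<Rightarrow> 'a::ab_group_add \<Rightarrow> 'a"
    and m :: "'a \<Rightarrow> 'a \<Rightarrow> 'a" and u :: 'a
  assumes unital_algebra: "unital_algebra sc m u"
begin

sublocale vector_space sc
  using unital_algebra by (simp add: unital_algebra_def module_iff_vector_space)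

lemma mult_add_left: "m (x + y) z = m x z + m y z"
  and mult_add_right: "m x (y + z) = m x y + m x z"
  and mult_scale_left: "m (sc c x) y = sc c (m x y)"
  and mult_scale_right: "m x (sc c y) = sc c (m x y)"
  using unital_algebra by (auto simp: unital_algebra_def bilinear_op_def)

lemma mult_unit_left [simp]: "m u x = x"
  and mult_unit_right [simp]: "m x u = x"
  using unital_algebra by (auto simp: unital_algebra_def)

lemma mult_diff_right: "m x (y - z) = m x y - m x z"
  by (metis add_diff_cancel mult_add_right diff_add_cancel)

lemma scale_two: "sc 2 x = x + x"
  using scale_left_distrib[of 1 1 x] by simp

lemma double_cancel:
  fixes a b :: 'a
  assumes "(2::'k) \<noteq> 0" and "a + a = b + b"
  shows "a = b"
  using assms by (simp flip: scale_two)

lemma teval_primitive: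
  assumes "primitive sc u \<Delta> x" and "bilinear_op sc F"
  shows "teval F (\<Delta> x) = F x u + F u x"
  using teq_teval_bilinear_op[OF module_axioms _ assms(2)] assms(1)
  by (simp add: primitive_def teval_def)

lemma primitive_mult_identity:
  assumes "primitive sc u \<Delta> a"
    and "teval (\<lambda>p q. m p (m y (m q z))) (\<Delta> a) = teval (\<lambda>p q. m (m p (m y q)) z) (\<Delta> a)"
  shows "m a (m y z) + m y (m a z) = m (m a y) z + m (m y a) z"
proof -
  have "bilinear_op sc (\<lambda>p q. m p (m y (m q z)))" "bilinear_op sc (\<lambda>p q. m (m p (m y q)) z)"
    by (simp_all add: bilinear_op_def mult_add_left mult_add_right mult_scale_left mult_scale_right)
  with assms show ?thesis
    by (simp add: teval_primitive)
qed

lemma npow_mult_left: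
  assumes "(2::'k) \<noteq> 0"
    and e: "\<And>y z. m e (m y z) + m y (m e z) = m (m e y) z + m (m y e) z"
  shows "m (npow m u e k) z = npow m z e k"
proof (induction k arbitrary: z)
  case 0
  show ?case by simp
next
  case (Suc k)
  let ?x = "npow m u e k"
  have "m e (m ?x z) = npow m z e (Suc k)"
    by (simp add: Suc)
  moreover have "m ?x (m e z) = npow m z e (Suc k)"
    by (simp only: Suc npow_Suc_right)
  moreover have "m ?x e = npow m u e (Suc k)"
    using Suc[of e] npow_Suc_right[of m u e k] by simp
  moreover have "m e ?x = npow m u e (Suc k)"
    by simp
  ultimately show ?case
    using e[of ?x z] double_cancel[OF assms(1)] by metis
qed

lemma derivation_npow:
  assumes leibniz: "\<And>x y. D (m x y) = m (D x) y + m x (D y)" and "D e = sc c e"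
  shows "D (npow m u e k) = sc (of_nat k * c) (npow m u e k)"
proof (induction k)
  case 0
  show ?case
    using leibniz[of u u] by simp
next
  case (Suc k)
  have "D (npow m u e (Suc k)) = sc c (npow m u e (Suc k)) + sc (of_nat k * c) (npow m u e (Suc k))"
    using leibniz[of e "npow m u e k"] by (simp add: Suc assms(2) mult_scale_left mult_scale_right)
  also have "\<dots> = sc (c + of_nat k * c) (npow m u e (Suc k))"
    by (rule scale_left_distrib[symmetric])
  finally show ?case
    by (simp add: distrib_right)
qed

lemma mult_left_npow_Suc:
  assumes commutator:
    "\<And>k. m e (m f (npow m u e k)) - m f (npow m u e (Suc k)) = sc (of_nat (2 * k)) (npow m u e k)"
  shows "m f (npow m u e (Suc k)) = npow m f e (Suc k) - sc (of_nat (Suc k * k)) (npow m u e k)"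
proof (induction k)
  case 0
  show ?case
    using commutator[of 0] by simp
next
  case (Suc k)
  let ?x = "npow m u e (Suc k)"
  have "m f (m e ?x) = m e (m f ?x) - sc (of_nat (2 * Suc k)) ?x"
    using commutator[of "Suc k"] unfolding npow.simps(2)[of m u e "Suc k"]
    by (simp add: eq_diff_eq diff_eq_eq add.commute)
  also have "\<dots> = npow m f e (Suc (Suc k)) - sc (of_nat (Suc k * k)) ?x
                     - sc (of_nat (2 * Suc k)) ?x"
    by (subst Suc) (simp only: mult_diff_right mult_scale_right npow.simps(2))
  also have "\<dots> = npow m f e (Suc (Suc k)) - sc (of_nat (Suc k * k) + of_nat (2 * Suc k)) ?x"
    by (simp only: diff_diff_eq scale_left_distrib)
  also have "of_nat (Suc k * k) + of_nat (2 * Suc k) = (of_nat (Suc (Suc k) * Suc k) :: 'k)"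
    by (simp add: algebra_simps)
  finally show ?case
    by simp
qed

end

theorem lemma3p1:
  fixes sc :: "'k::field_char_0 \<Rightarrow> 'a::ab_group_add \<Rightarrow> 'a"
    and m :: "'a \<Rightarrow> 'a \<Rightarrow> 'a" and u :: 'a
    and \<Delta> :: "'a \<Rightarrow> ('a \<times> 'a) list" and \<epsilon> :: "'a \<Rightarrow> 'k"
    and e f :: 'a and n :: nat
  assumes "U_S2 sc m u \<Delta> \<epsilon> e f"
    and "n \<ge> 1"
  shows "m (npow m u e n) f - m f (npow m u e n) = sc (of_nat (n * (n - 1))) (npow m u e (n - 1))"
proof -
  from assms(1) have bialgebra: "cocomm_bialgebra sc m u \<Delta> \<epsilon>"
    and primitives: "{x. primitive sc u \<Delta> x} = {sc a e + sc b f | a b. True}"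
    and identity: "\<And>a y z. teval (\<lambda>p q. m p (m y (m q z))) (\<Delta> a) =
                             teval (\<lambda>p q. m (m p (m y q)) z) (\<Delta> a)"
    and triple_efe: "m e (m f e) - m f (m e e) = e + e"
    and leibniz: "\<And>x y. m e (m f (m x y)) - m f (m e (m x y)) =
                  m (m e (m f x) - m f (m e x)) y + m x (m e (m f y) - m f (m e y))"
    unfolding U_S2_def by blast+
  interpret unital_nonassoc_algebra sc m u
    using bialgebra by unfold_locales (simp add: cocomm_bialgebra_def)
  have "primitive sc u \<Delta> e"
    using primitives by (force intro: exI[of _ 1] exI[of _ 0])
  then have e_identity: "m e (m y z) + m y (m e z) = m (m e y) z + m (m y e) z" for y z
    using identity by (rule primitive_mult_identity)
  define D where "D x = m e (m f x) - m f (m e x)" for x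
  have "D (npow m u e k) = sc (of_nat k * 2) (npow m u e k)" for k
    using leibniz triple_efe by (intro derivation_npow) (simp_all add: D_def scale_two)
  then have "m f (npow m u e (Suc k)) = npow m f e (Suc k) - sc (of_nat (Suc k * k)) (npow m u e k)" for k
    by (intro mult_left_npow_Suc) (simp add: D_def mult.commute)
  moreover obtain k where "n = Suc k"
    using assms(2) by (cases n) auto
  moreover have "m (npow m u e n) f = npow m f e n"
    using e_identity by (intro npow_mult_left) simp_all
  ultimately show ?thesis
    by simp
qed

end
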